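(* Let $L\ge1$ be an integer and $\theta>0$. Let $\Omega=\{0,1\}^I$ for a countable index set $I$, equipped with a product probability measure, and partially ordered coordinatewise. For $t=0,1,\dots,L$ let $S_t:\Omega\to(0,\infty]$ be nonincreasing functions (the SIR of a typical link at time $t$, as a function of the configuration $\omega$ of active interferers), such that $P(S_t>\theta)=1-P_b$ for all $t$, with $P_b\in[0,1)$. Define $$P_{\text{fail}}=1-\frac{P(S_0>\theta,S_1>\theta,\dots,S_L>\theta)}{P(S_0>\theta)},\qquad P_{out}=P_b+(1-P_b)P_{\text{fail}}.$$ Then $P_{out}\le 1-(1-P_b)^{L+1}$.
   Context: CSMA model with energy-harvesting transmitters: a packet occupies $L$ slots; the typical transmitter backs off (with probability $P_b$) if its SIR at time $0$ is at most $\theta$, and otherwise transmits, the transmission failing if the SIR drops to at most $\theta$ at some time $1,\dots,L$. The configuration $\omega$ records which interferers are active at each time, with independent activity indicators (the paper's independence approximation), and since adding active interferers cannot increase the SIR, each $S_t$ is nonincreasing in $\omega$; all SIRs are identically distributed. $P_{out}$ is the outage probability. *)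

theory Defs
  imports "HOL-Probability.Probability"
begin

definition bern_prod :: "('i \<Rightarrow> real) \<Rightarrow> ('i \<Rightarrow> bool) measure" where
  "bern_prod p = PiM UNIV (\<lambda>i. measure_pmf (bernoulli_pmf (p i)))"

definition P_fail :: "('i \<Rightarrow> bool) measure \<Rightarrow> (nat \<Rightarrow> ('i \<Rightarrow> bool) \<Rightarrow> ereal) \<Rightarrow> real \<Rightarrow> nat \<Rightarrow> real" where
  "P_fail M S \<theta> L =
     1 - measure M {\<omega> \<in> space M. \<forall>t\<le>L. S t \<omega> > ereal \<theta>}
         / measure M {\<omega> \<in> space M. S 0 \<omega> > ereal \<theta>}"

definition P_out :: "real \<Rightarrow> ('i \<Rightarrow> bool) measure \<Rightarrow> (nat \<Rightarrow> ('i \<Rightarrow> bool) \<Rightarrow> ereal) \<Rightarrow> real \<Rightarrow> nat \<Rightarrow> real" where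
  "P_out Pb M S \<theta> L = Pb + (1 - Pb) * P_fail M S \<theta> L"

end

theory Submission
  imports Defs
begin

text \<open>This is the Harris (FKG) inequality for the product of Bernoulli measures: decreasing events
  are positively correlated, hence \<open>P(S\<^sub>0 > \<theta>, \<dots>, S\<^sub>L > \<theta>) \<ge> \<Prod>\<^sub>t P(S\<^sub>t > \<theta>) = (1 - P\<^sub>b)\<^bsup>L+1\<^esup>\<close>,
  which is the claim after unfolding \<open>P\<^sub>o\<^sub>u\<^sub>t\<close>. For bounded decreasing functions of finitely many
  coordinates the inequality follows by induction on the number of coordinates, conditioning on one
  coordinate at a time (Chebyshev's sum inequality for two points). A general measurable event is
  approximated in measure by an event depending on finitely many coordinates \<open>J\<close>; averaging its
  indicator over the coordinates outside \<open>J\<close> yields a decreasing function of the coordinates in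
  \<open>J\<close> that is still close to the indicator in \<open>L\<^sup>1\<close>, so the finite case passes to the limit.\<close>

definition merge_on :: "'i set \<Rightarrow> ('i \<Rightarrow> 'a) \<Rightarrow> ('i \<Rightarrow> 'a) \<Rightarrow> 'i \<Rightarrow> 'a" where
  "merge_on J x y = (\<lambda>i. if i \<in> J then x i else y i)"

definition depends_only_on :: "'i set \<Rightarrow> (('i \<Rightarrow> 'a) \<Rightarrow> 'b) \<Rightarrow> bool" where
  "depends_only_on J f \<longleftrightarrow> (\<forall>x y. f (merge_on J x y) = f x)"

lemma merge_on_merge_on_left: "merge_on J (merge_on J x z) y = merge_on J x y"
  by (auto simp: merge_on_def)

lemma merge_on_merge_on_self: "J \<subseteq> K \<Longrightarrow> merge_on J (merge_on K x y) x = x"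
  by (auto simp: merge_on_def fun_eq_iff)

lemma merge_on_fun_upd: "(merge_on J x y)(i := b) = merge_on (insert i J) (x(i := b)) y"
  by (auto simp: merge_on_def)

lemma depends_only_on_mono:
  assumes "J \<subseteq> K" and "depends_only_on J f"
  shows "depends_only_on K f"
  unfolding depends_only_on_def
proof (intro allI)
  fix x y
  show "f (merge_on K x y) = f x"
    using assms(2)[unfolded depends_only_on_def, rule_format, of "merge_on K x y" x]
    by (simp add: merge_on_merge_on_self[OF assms(1)])
qed

lemma depends_only_on_empty:
  assumes "depends_only_on {} f"
  shows "f x = f y"
  using assms[unfolded depends_only_on_def, rule_format, of y x] by (simp add: merge_on_def)

lemma depends_only_on_fun_upd:
  "depends_only_on (insert i J) f \<Longrightarrow> depends_only_on J (\<lambda>x. f (x(i := b)))"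
  unfolding depends_only_on_def by (simp add: merge_on_fun_upd)

lemma antimono_fun_upd:
  fixes f :: "('a \<Rightarrow> 'b::order) \<Rightarrow> 'c::order"
  assumes "antimono f"
  shows "antimono (\<lambda>x. f (x(i := b)))"
proof (rule antimonoI)
  fix x y :: "'a \<Rightarrow> 'b"
  assume "x \<le> y"
  then have "x(i := b) \<le> y(i := b)"
    by (auto simp: le_fun_def)
  with assms show "f (y(i := b)) \<le> f (x(i := b))"
    by (rule antimonoD)
qed

lemma space_bern_prod [simp]: "space (bern_prod p) = UNIV"
  by (auto simp: bern_prod_def space_PiM PiE_def extensional_def)

lemma prob_space_bern_prod: "prob_space (bern_prod p)"
  unfolding bern_prod_def by (intro prob_space_PiM measure_pmf.prob_space_axioms)

lemma measurable_merge_on: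
  "(\<lambda>z. merge_on J (fst z) (snd z)) \<in> bern_prod p \<Otimes>\<^sub>M bern_prod p \<rightarrow>\<^sub>M bern_prod p"
  unfolding bern_prod_def merge_on_def by (rule measurable_PiM_single') auto

lemma measurable_merge_on_right: "merge_on J x \<in> bern_prod p \<rightarrow>\<^sub>M bern_prod p"
  unfolding bern_prod_def merge_on_def by (rule measurable_PiM_single') auto

lemma measurable_fun_upd_bern_prod: "(\<lambda>x. x(i := b)) \<in> bern_prod p \<rightarrow>\<^sub>M bern_prod p"
  unfolding bern_prod_def by (rule measurable_PiM_single') auto

lemma integrable_bern_prod_bounded:
  fixes h :: "_ \<Rightarrow> real"
  shows "h \<in> borel_measurable (bern_prod p) \<Longrightarrow> (\<And>x. \<bar>h x\<bar> \<le> B) \<Longrightarrow> integrable (bern_prod p) h"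
  by (rule finite_measure.integrable_const_bound[where B=B])
     (auto intro: prob_space.finite_measure prob_space_bern_prod)

lemma prod_emb_bern_prod:
  "prod_emb UNIV (\<lambda>i. measure_pmf (bernoulli_pmf (p i))) K (\<Pi>\<^sub>E k\<in>K. A k) = {x. \<forall>k\<in>K. x k \<in> A k}"
  by (auto simp: prod_emb_def space_PiM PiE_def extensional_def Pi_iff)

lemma sets_bern_prod_cylinder: "finite K \<Longrightarrow> {x. \<forall>k\<in>K. x k \<in> A k} \<in> sets (bern_prod p)"
proof -
  assume "finite K"
  then have "Measurable.pred (bern_prod p) (\<lambda>x. \<forall>k\<in>K. x k \<in> A k)"
    unfolding bern_prod_def by measurable
  then show ?thesis by (simp add: pred_def)
qed

lemma emeasure_bern_prod_cylinder:
  "finite K \<Longrightarrow> emeasure (bern_prod p) {x. \<forall>k\<in>K. x k \<in> A k}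
     = (\<Prod>k\<in>K. emeasure (measure_pmf (bernoulli_pmf (p k))) (A k))"
  using emeasure_PiM_emb[of UNIV "\<lambda>i. measure_pmf (bernoulli_pmf (p i))" K A]
  by (simp add: prod_emb_bern_prod bern_prod_def measure_pmf.prob_space_axioms)

lemma distr_merge_on_bern_prod:
  "distr (bern_prod p \<Otimes>\<^sub>M bern_prod p) (bern_prod p) (\<lambda>z. merge_on J (fst z) (snd z)) = bern_prod p"
proof -
  interpret P: prob_space "bern_prod p" by (rule prob_space_bern_prod)
  interpret PP: pair_prob_space "bern_prod p" "bern_prod p" ..
  let ?D = "distr (bern_prod p \<Otimes>\<^sub>M bern_prod p) (bern_prod p) (\<lambda>z. merge_on J (fst z) (snd z))"
  let ?cyl = "\<lambda>K A. {x. \<forall>k\<in>K. x k \<in> A k}"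
  have cylinder: "emeasure ?D (?cyl K A) = emeasure (bern_prod p) (?cyl K A)" if K: "finite K" for K A
  proof -
    have preimage: "(\<lambda>z. merge_on J (fst z) (snd z)) -` ?cyl K A \<inter> space (bern_prod p \<Otimes>\<^sub>M bern_prod p)
       = ?cyl (K \<inter> J) A \<times> ?cyl (K - J) A"
      by (auto simp: merge_on_def space_pair_measure)
    have "emeasure ?D (?cyl K A) = emeasure (bern_prod p \<Otimes>\<^sub>M bern_prod p) (?cyl (K \<inter> J) A \<times> ?cyl (K - J) A)"
      using K by (subst emeasure_distr[OF measurable_merge_on]) (simp_all only: sets_bern_prod_cylinder preimage)
    also have "\<dots> = emeasure (bern_prod p) (?cyl (K \<inter> J) A) * emeasure (bern_prod p) (?cyl (K - J) A)"
      using K by (intro P.emeasure_pair_measure_Times) (auto intro: sets_bern_prod_cylinder)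
    also have "\<dots> = emeasure (bern_prod p) (?cyl K A)"
      using K by (simp add: emeasure_bern_prod_cylinder prod.Int_Diff[of K _ J])
    finally show ?thesis .
  qed
  have finite: "finite_measure ?D"
    by (intro prob_space.finite_measure prob_space.prob_space_distr[OF PP.P.prob_space_axioms measurable_merge_on])
  show ?thesis
    unfolding bern_prod_def
    apply (rule measure_eqI_PiM_infinite)
       apply simp
      apply simp
     apply (unfold prod_emb_bern_prod)
     apply (rule cylinder[unfolded bern_prod_def], assumption)
    apply (rule finite[unfolded bern_prod_def])
    done
qed

definition average_outside :: "('i \<Rightarrow> real) \<Rightarrow> 'i set \<Rightarrow> (('i \<Rightarrow> bool) \<Rightarrow> real) \<Rightarrow> ('i \<Rightarrow> bool) \<Rightarrow> real"
  where "average_outside p J h x = (\<integral>y. h (merge_on J x y) \<partial>bern_prod p)"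

lemma integral_average_outside:
  fixes h :: "_ \<Rightarrow> real"
  assumes h: "h \<in> borel_measurable (bern_prod p)" "\<And>x. \<bar>h x\<bar> \<le> B"
  shows "(\<integral>x. average_outside p J h x \<partial>bern_prod p) = (\<integral>x. h x \<partial>bern_prod p)"
proof -
  interpret P: prob_space "bern_prod p" by (rule prob_space_bern_prod)
  interpret PP: pair_prob_space "bern_prod p" "bern_prod p" ..
  have "(\<integral>x. h x \<partial>bern_prod p)
      = (\<integral>x. h x \<partial>distr (bern_prod p \<Otimes>\<^sub>M bern_prod p) (bern_prod p) (\<lambda>z. merge_on J (fst z) (snd z)))"
    by (simp only: distr_merge_on_bern_prod)
  also have "\<dots> = (\<integral>z. h (merge_on J (fst z) (snd z)) \<partial>(bern_prod p \<Otimes>\<^sub>M bern_prod p))"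
    by (rule integral_distr[OF measurable_merge_on h(1)])
  also have "\<dots> = (\<integral>x. (\<integral>y. h (merge_on J (fst (x, y)) (snd (x, y))) \<partial>bern_prod p) \<partial>bern_prod p)"
  proof (rule PP.integral_fst'[symmetric])
    show "integrable (bern_prod p \<Otimes>\<^sub>M bern_prod p) (\<lambda>z. h (merge_on J (fst z) (snd z)))"
      by (rule PP.P.integrable_const_bound[where B=B]) (auto intro: h measurable_compose[OF measurable_merge_on])
  qed
  finally show ?thesis
    by (simp add: average_outside_def)
qed

lemma integral_bern_prod_split_coordinate:
  fixes h :: "_ \<Rightarrow> real"
  assumes h: "h \<in> borel_measurable (bern_prod p)" "\<And>x. \<bar>h x\<bar> \<le> B"
    and p: "0 \<le> p i" "p i \<le> 1"
  shows "(\<integral>x. h x \<partial>bern_prod p)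
    = p i * (\<integral>x. h (x(i := True)) \<partial>bern_prod p) + (1 - p i) * (\<integral>x. h (x(i := False)) \<partial>bern_prod p)"
proof -
  let ?B = "measure_pmf (bernoulli_pmf (p i))"
  let ?upd = "\<lambda>(b, x). x(i := b)"
  interpret P: prob_space "bern_prod p" by (rule prob_space_bern_prod)
  interpret PP: pair_prob_space ?B "bern_prod p" by unfold_locales
  have distr: "distr (?B \<Otimes>\<^sub>M bern_prod p) (bern_prod p) ?upd = bern_prod p"
    using distr_pair_PiM_eq_PiM[of UNIV "\<lambda>i. measure_pmf (bernoulli_pmf (p i))" i]
    by (simp add: bern_prod_def measure_pmf.prob_space_axioms)
  have upd: "?upd \<in> ?B \<Otimes>\<^sub>M bern_prod p \<rightarrow>\<^sub>M bern_prod p"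
    unfolding bern_prod_def by (rule measurable_PiM_single') (auto simp: split_beta)
  have "(\<integral>x. h x \<partial>bern_prod p) = (\<integral>x. h x \<partial>distr (?B \<Otimes>\<^sub>M bern_prod p) (bern_prod p) ?upd)"
    by (simp only: distr)
  also have "\<dots> = (\<integral>z. h (?upd z) \<partial>(?B \<Otimes>\<^sub>M bern_prod p))"
    by (rule integral_distr[OF upd h(1)])
  also have "\<dots> = (\<integral>b. (\<integral>x. h (?upd (b, x)) \<partial>bern_prod p) \<partial>?B)"
  proof (rule PP.integral_fst'[symmetric])
    show "integrable (?B \<Otimes>\<^sub>M bern_prod p) (\<lambda>z. h (?upd z))"
      by (rule PP.P.integrable_const_bound[where B=B]) (auto intro: h measurable_compose[OF upd])
  qed
  also have "\<dots> = (\<Sum>b\<in>UNIV. (\<integral>x. h (x(i := b)) \<partial>bern_prod p) * pmf (bernoulli_pmf (p i)) b)"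
    by (subst integral_measure_pmf_real[where A=UNIV]) auto
  also have "\<dots> = p i * (\<integral>x. h (x(i := True)) \<partial>bern_prod p) + (1 - p i) * (\<integral>x. h (x(i := False)) \<partial>bern_prod p)"
    using p by (simp add: UNIV_bool)
  finally show ?thesis .
qed

lemma two_point_chebyshev:
  fixes q aT aF bT bF :: real
  assumes "0 \<le> q" "q \<le> 1" "aT \<le> aF" "bT \<le> bF"
  shows "(q * aT + (1 - q) * aF) * (q * bT + (1 - q) * bF) \<le> q * (aT * bT) + (1 - q) * (aF * bF)"
proof -
  have "(q * aT + (1 - q) * aF) * (q * bT + (1 - q) * bF)
      = q * (aT * bT) + (1 - q) * (aF * bF) - q * (1 - q) * ((aF - aT) * (bF - bT))"
    by (simp add: algebra_simps)
  moreover have "0 \<le> q * (1 - q) * ((aF - aT) * (bF - bT))"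
    using assms by simp
  ultimately show ?thesis
    by linarith
qed

lemma integral_fun_upd_True_le_False:
  fixes h :: "('i \<Rightarrow> bool) \<Rightarrow> real"
  assumes "h \<in> borel_measurable (bern_prod p)" "\<And>x. \<bar>h x\<bar> \<le> B" "antimono h"
  shows "(\<integral>x. h (x(i := True)) \<partial>bern_prod p) \<le> (\<integral>x. h (x(i := False)) \<partial>bern_prod p)"
proof -
  have "integrable (bern_prod p) (\<lambda>x. h (x(i := b)))" for b
    using assms by (intro integrable_bern_prod_bounded[where B=B]
        measurable_compose[OF measurable_fun_upd_bern_prod]) auto
  moreover have "h (x(i := True)) \<le> h (x(i := False))" for x
    using assms(3) by (rule antimonoD) (auto simp: le_fun_def)
  ultimately show ?thesis
    by (intro integral_mono)
qed

lemma harris_inequality_finite_dependence: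
  fixes f g :: "('i \<Rightarrow> bool) \<Rightarrow> real"
  assumes "finite J" and p: "\<forall>i. 0 \<le> p i \<and> p i \<le> 1"
    and "f \<in> borel_measurable (bern_prod p)" "g \<in> borel_measurable (bern_prod p)"
    and "\<And>x. \<bar>f x\<bar> \<le> B" "\<And>x. \<bar>g x\<bar> \<le> B"
    and "antimono f" "antimono g"
    and "depends_only_on J f" "depends_only_on J g"
  shows "(\<integral>x. f x \<partial>bern_prod p) * (\<integral>x. g x \<partial>bern_prod p) \<le> (\<integral>x. f x * g x \<partial>bern_prod p)"
  using assms(1,3-)
proof (induction J arbitrary: f g rule: finite_induct)
  case empty
  interpret prob_space "bern_prod p"
    by (rule prob_space_bern_prod)
  obtain u v where "\<And>x. f x = u" "\<And>x. g x = v"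
    using empty.prems(7,8) depends_only_on_empty by metis
  then show ?case
    using prob_space by simp
next
  case (insert i J)
  let ?q = "p i"
  have B: "0 \<le> B"
    using insert.prems(3) abs_ge_zero order_trans by blast
  have fg_bound: "\<bar>f x * g x\<bar> \<le> B * B" for x
    unfolding abs_mult using insert.prems(3,4) B by (intro mult_mono) auto
  have fixed: "(\<lambda>x. h (x(i := b))) \<in> borel_measurable (bern_prod p) \<and> antimono (\<lambda>x. h (x(i := b)))
      \<and> depends_only_on J (\<lambda>x. h (x(i := b)))"
    if "h \<in> borel_measurable (bern_prod p)" "antimono h" "depends_only_on (insert i J) h" for h b
    using that by (auto intro: measurable_compose[OF measurable_fun_upd_bern_prod] antimono_fun_upd
        depends_only_on_fun_upd)
  have IH: "(\<integral>x. f (x(i := b)) \<partial>bern_prod p) * (\<integral>x. g (x(i := b)) \<partial>bern_prod p)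
      \<le> (\<integral>x. f (x(i := b)) * g (x(i := b)) \<partial>bern_prod p)" for b
    using insert.prems fixed[of f b] fixed[of g b] by (intro insert.IH) fast+
  have split: "(\<integral>x. h x \<partial>bern_prod p)
      = ?q * (\<integral>x. h (x(i := True)) \<partial>bern_prod p) + (1 - ?q) * (\<integral>x. h (x(i := False)) \<partial>bern_prod p)"
    if "h \<in> borel_measurable (bern_prod p)" "\<And>x. \<bar>h x\<bar> \<le> C" for h C
    using that p by (intro integral_bern_prod_split_coordinate) auto
  have "(\<integral>x. f x \<partial>bern_prod p) * (\<integral>x. g x \<partial>bern_prod p)
      \<le> ?q * ((\<integral>x. f (x(i := True)) \<partial>bern_prod p) * (\<integral>x. g (x(i := True)) \<partial>bern_prod p))
        + (1 - ?q) * ((\<integral>x. f (x(i := False)) \<partial>bern_prod p) * (\<integral>x. g (x(i := False)) \<partial>bern_prod p))"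
    unfolding split[OF insert.prems(1,3)] split[OF insert.prems(2,4)]
    using p insert.prems by (intro two_point_chebyshev integral_fun_upd_True_le_False) auto
  also have "\<dots> \<le> ?q * (\<integral>x. f (x(i := True)) * g (x(i := True)) \<partial>bern_prod p)
        + (1 - ?q) * (\<integral>x. f (x(i := False)) * g (x(i := False)) \<partial>bern_prod p)"
    using p IH by (intro add_mono mult_left_mono) auto
  also have "\<dots> = (\<integral>x. f x * g x \<partial>bern_prod p)"
    using insert.prems(1,2) fg_bound by (intro split[symmetric]) auto
  finally show ?case .
qed

definition finitely_approximable :: "('i \<Rightarrow> real) \<Rightarrow> ('i \<Rightarrow> bool) set \<Rightarrow> bool" where
  "finitely_approximable p A \<longleftrightarrow> (\<forall>e>0. \<exists>J C. finite J \<and> C \<in> sets (bern_prod p)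
     \<and> depends_only_on J (\<lambda>x. x \<in> C) \<and> measure (bern_prod p) (sym_diff A C) < e)"

lemma finitely_approximable_cylinder:
  assumes "finite K"
  shows "finitely_approximable p {x. \<forall>k\<in>K. x k \<in> E k}"
proof -
  have "depends_only_on K (\<lambda>x. x \<in> {x. \<forall>k\<in>K. x k \<in> E k})"
    by (simp add: depends_only_on_def merge_on_def)
  then show ?thesis
    unfolding finitely_approximable_def using assms sets_bern_prod_cylinder by fastforce
qed

lemma finitely_approximable_empty: "finitely_approximable p {}"
  unfolding finitely_approximable_def by (auto simp: depends_only_on_def intro!: exI[of _ "{}"])

lemma finitely_approximable_Compl:
  assumes "finitely_approximable p A"
  shows "finitely_approximable p (UNIV - A)"
  unfolding finitely_approximable_def
proof (intro allI impI)
  fix e :: real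
  assume "e > 0"
  then obtain J C where JC: "finite J" "C \<in> sets (bern_prod p)" "depends_only_on J (\<lambda>x. x \<in> C)"
    "measure (bern_prod p) (sym_diff A C) < e"
    using assms unfolding finitely_approximable_def by blast
  have "sym_diff (UNIV - A) (UNIV - C) = sym_diff A C"
    by blast
  moreover have "UNIV - C \<in> sets (bern_prod p)"
    using sets.compl_sets[OF JC(2)] by simp
  moreover have "depends_only_on J (\<lambda>x. x \<in> UNIV - C)"
    using JC(3) by (simp add: depends_only_on_def)
  ultimately show "\<exists>J C. finite J \<and> C \<in> sets (bern_prod p) \<and> depends_only_on J (\<lambda>x. x \<in> C)
      \<and> measure (bern_prod p) (sym_diff (UNIV - A) C) < e"
    using JC by metis
qed

lemma (in finite_measure) measure_sym_diff_triangle: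
  assumes "A \<in> sets M" "B \<in> sets M" "C \<in> sets M"
  shows "measure M (sym_diff A C) \<le> measure M (sym_diff A B) + measure M (sym_diff B C)"
proof -
  have "measure M (sym_diff A C) \<le> measure M (sym_diff A B \<union> sym_diff B C)"
    using assms by (intro finite_measure_mono) auto
  also have "\<dots> \<le> measure M (sym_diff A B) + measure M (sym_diff B C)"
    using assms by (intro measure_Un_le) auto
  finally show ?thesis .
qed

lemma finitely_approximable_closed:
  assumes "A \<in> sets (bern_prod p)"
    and "\<And>e. e > 0 \<Longrightarrow> \<exists>B\<in>sets (bern_prod p). finitely_approximable p B
      \<and> measure (bern_prod p) (sym_diff A B) < e"
  shows "finitely_approximable p A"
  unfolding finitely_approximable_def
proof (intro allI impI)
  interpret prob_space "bern_prod p"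
    by (rule prob_space_bern_prod)
  fix e :: real
  assume "e > 0"
  then obtain B where B: "B \<in> sets (bern_prod p)" "finitely_approximable p B"
    "measure (bern_prod p) (sym_diff A B) < e / 2"
    using assms(2)[of "e / 2"] by auto
  then obtain J C where JC: "finite J" "C \<in> sets (bern_prod p)" "depends_only_on J (\<lambda>x. x \<in> C)"
    "measure (bern_prod p) (sym_diff B C) < e / 2"
    using \<open>e > 0\<close> unfolding finitely_approximable_def by (meson half_gt_zero)
  have "measure (bern_prod p) (sym_diff A C) < e"
    using measure_sym_diff_triangle[OF assms(1) B(1) JC(2)] B(3) JC(4) by linarith
  then show "\<exists>J C. finite J \<and> C \<in> sets (bern_prod p) \<and> depends_only_on J (\<lambda>x. x \<in> C)
      \<and> measure (bern_prod p) (sym_diff A C) < e"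
    using JC by blast
qed

lemma finitely_approximable_Un:
  assumes "A \<in> sets (bern_prod p)" "B \<in> sets (bern_prod p)"
    and "finitely_approximable p A" "finitely_approximable p B"
  shows "finitely_approximable p (A \<union> B)"
  unfolding finitely_approximable_def
proof (intro allI impI)
  interpret prob_space "bern_prod p"
    by (rule prob_space_bern_prod)
  fix e :: real
  assume "e > 0"
  then obtain J1 C1 J2 C2 where
    JC1: "finite J1" "C1 \<in> sets (bern_prod p)" "depends_only_on J1 (\<lambda>x. x \<in> C1)"
      "measure (bern_prod p) (sym_diff A C1) < e / 2" and
    JC2: "finite J2" "C2 \<in> sets (bern_prod p)" "depends_only_on J2 (\<lambda>x. x \<in> C2)"
      "measure (bern_prod p) (sym_diff B C2) < e / 2"
    using assms(3,4) unfolding finitely_approximable_def by (meson half_gt_zero)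
  have "depends_only_on (J1 \<union> J2) (\<lambda>x. x \<in> C1 \<union> C2)"
    using depends_only_on_mono[OF _ JC1(3), of "J1 \<union> J2"] depends_only_on_mono[OF _ JC2(3), of "J1 \<union> J2"]
    by (simp add: depends_only_on_def)
  moreover have "measure (bern_prod p) (sym_diff (A \<union> B) (C1 \<union> C2))
      \<le> measure (bern_prod p) (sym_diff A C1 \<union> sym_diff B C2)"
    using assms JC1 JC2 by (intro finite_measure_mono) auto
  moreover have "\<dots> \<le> measure (bern_prod p) (sym_diff A C1) + measure (bern_prod p) (sym_diff B C2)"
    using assms JC1 JC2 by (intro measure_Un_le) auto
  ultimately show "\<exists>J C. finite J \<and> C \<in> sets (bern_prod p) \<and> depends_only_on J (\<lambda>x. x \<in> C)
      \<and> measure (bern_prod p) (sym_diff (A \<union> B) C) < e"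
    using JC1 JC2 by (intro exI[of _ "J1 \<union> J2"] exI[of _ "C1 \<union> C2"]) auto
qed

lemma finitely_approximable_UN:
  fixes A :: "nat \<Rightarrow> ('i \<Rightarrow> bool) set"
  assumes sets: "\<And>n. A n \<in> sets (bern_prod p)" and approx: "\<And>n. finitely_approximable p (A n)"
  shows "finitely_approximable p (\<Union>n. A n)"
proof (rule finitely_approximable_closed)
  interpret prob_space "bern_prod p"
    by (rule prob_space_bern_prod)
  show U: "(\<Union>n. A n) \<in> sets (bern_prod p)"
    using sets by (intro sets.countable_UN) auto
  have partial_sets: "(\<Union>n<N. A n) \<in> sets (bern_prod p)" for N
    using sets by auto
  have partial: "finitely_approximable p (\<Union>n<N. A n)" for N
  proof (induction N)
    case 0
    show ?case
      by (simp add: finitely_approximable_empty)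
  next
    case (Suc N)
    then show ?case
      unfolding lessThan_Suc UN_insert using sets partial_sets approx
      by (intro finitely_approximable_Un) auto
  qed
  have "(\<lambda>N. measure (bern_prod p) (\<Union>n<N. A n)) \<longlonglongrightarrow> measure (bern_prod p) (\<Union>N. \<Union>n<N. A n)"
    using partial_sets by (intro finite_Lim_measure_incseq) (auto simp: incseq_def intro: order_less_le_trans)
  moreover have "(\<Union>N. \<Union>n<N. A n) = (\<Union>n. A n)"
    by auto
  ultimately have lim: "(\<lambda>N. measure (bern_prod p) (\<Union>n<N. A n)) \<longlonglongrightarrow> measure (bern_prod p) (\<Union>n. A n)"
    by simp
  fix e :: real
  assume "e > 0"
  then obtain N where N: "measure (bern_prod p) (\<Union>n. A n) - e < measure (bern_prod p) (\<Union>n<N. A n)"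
    using order_tendstoD(1)[OF lim, of "measure (bern_prod p) (\<Union>n. A n) - e"]
    by (auto simp: eventually_sequentially)
  have "sym_diff (\<Union>n. A n) (\<Union>n<N. A n) = (\<Union>n. A n) - (\<Union>n<N. A n)"
    by auto
  moreover have "measure (bern_prod p) ((\<Union>n. A n) - (\<Union>n<N. A n))
      = measure (bern_prod p) (\<Union>n. A n) - measure (bern_prod p) (\<Union>n<N. A n)"
    using U partial_sets by (intro finite_measure_Diff) auto
  ultimately show "\<exists>B\<in>sets (bern_prod p). finitely_approximable p B
      \<and> measure (bern_prod p) (sym_diff (\<Union>n. A n) B) < e"
    using N partial partial_sets by (intro bexI[of _ "\<Union>n<N. A n"]) auto
qed

lemma finitely_approximable_sets:
  assumes "A \<in> sets (bern_prod p)"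
  shows "finitely_approximable p A"
proof -
  let ?M = "\<lambda>i. measure_pmf (bernoulli_pmf (p i))"
  have "A \<in> sigma_sets UNIV (prod_algebra UNIV ?M)"
    using assms by (simp add: bern_prod_def sets_PiM PiE_def extensional_def)
  then show ?thesis
  proof induction
    case (Basic A)
    then obtain K E where "A = prod_emb UNIV ?M K (\<Pi>\<^sub>E k\<in>K. E k)" "finite K"
      by (auto elim!: prod_algebraE)
    then show ?case
      by (simp add: prod_emb_bern_prod finitely_approximable_cylinder)
  next
    case Empty
    show ?case
      by (rule finitely_approximable_empty)
  next
    case (Compl A)
    show ?case
      using Compl.IH by (rule finitely_approximable_Compl)
  next
    case (Union A)
    have "A n \<in> sets (bern_prod p)" for n
      using Union.hyps by (simp add: bern_prod_def sets_PiM PiE_def extensional_def)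
    then show ?case
      using Union.IH by (rule finitely_approximable_UN)
  qed
qed

lemma integrable_merge_on_right:
  fixes h :: "('i \<Rightarrow> bool) \<Rightarrow> real"
  assumes "h \<in> borel_measurable (bern_prod p)" "\<And>x. \<bar>h x\<bar> \<le> B"
  shows "integrable (bern_prod p) (\<lambda>y. h (merge_on J x y))"
  using assms by (intro integrable_bern_prod_bounded[where B=B] measurable_compose[OF measurable_merge_on_right])

lemma borel_measurable_average_outside:
  assumes "h \<in> borel_measurable (bern_prod p)"
  shows "average_outside p J h \<in> borel_measurable (bern_prod p)"
proof -
  interpret prob_space "bern_prod p"
    by (rule prob_space_bern_prod)
  have "(\<lambda>z. h (merge_on J (fst z) (snd z))) \<in> borel_measurable (bern_prod p \<Otimes>\<^sub>M bern_prod p)"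
    using assms by (rule measurable_compose[OF measurable_merge_on])
  then show ?thesis
    unfolding average_outside_def by (intro borel_measurable_lebesgue_integral) (simp add: split_beta')
qed

lemma average_outside_bounds:
  fixes h :: "('i \<Rightarrow> bool) \<Rightarrow> real"
  assumes "h \<in> borel_measurable (bern_prod p)" "\<And>x. h x \<in> {a..b}"
  shows "average_outside p J h x \<in> {a..b}"
proof -
  interpret prob_space "bern_prod p"
    by (rule prob_space_bern_prod)
  have "\<bar>h y\<bar> \<le> \<bar>a\<bar> + \<bar>b\<bar>" for y
    using assms(2)[of y] by (auto simp: abs_if)
  then have "integrable (bern_prod p) (\<lambda>y. h (merge_on J x y))"
    using assms(1) by (rule integrable_merge_on_right[rotated])
  then show ?thesis
    unfolding average_outside_def using assms(2)
    by (auto intro: integral_ge_const integral_le_const)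
qed

lemma abs_average_outside_le:
  fixes h :: "('i \<Rightarrow> bool) \<Rightarrow> real"
  assumes "h \<in> borel_measurable (bern_prod p)" "\<And>x. \<bar>h x\<bar> \<le> B"
  shows "\<bar>average_outside p J h x\<bar> \<le> B"
proof -
  have "h y \<in> {-B..B}" for y
    using assms(2)[of y] by (auto simp: abs_le_iff)
  then have "average_outside p J h x \<in> {-B..B}"
    by (rule average_outside_bounds[OF assms(1)])
  then show ?thesis
    by (auto simp: abs_le_iff)
qed

lemma antimono_average_outside:
  fixes h :: "('i \<Rightarrow> bool) \<Rightarrow> real"
  assumes "h \<in> borel_measurable (bern_prod p)" "\<And>x. \<bar>h x\<bar> \<le> B" "antimono h"
  shows "antimono (average_outside p J h)"
proof (rule antimonoI)
  fix x x' :: "'i \<Rightarrow> bool"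
  assume "x \<le> x'"
  then have "merge_on J x y \<le> merge_on J x' y" for y
    by (auto simp: merge_on_def le_fun_def)
  then show "average_outside p J h x' \<le> average_outside p J h x"
    unfolding average_outside_def using assms
    by (intro integral_mono integrable_merge_on_right[where B=B]) (auto dest: antimonoD)
qed

lemma depends_only_on_average_outside: "depends_only_on J (average_outside p J h)"
  by (simp add: depends_only_on_def average_outside_def merge_on_merge_on_left)

lemma abs_average_outside_diff_le:
  fixes h c :: "('i \<Rightarrow> bool) \<Rightarrow> real"
  assumes "h \<in> borel_measurable (bern_prod p)" "\<And>x. \<bar>h x\<bar> \<le> B" "depends_only_on J c"
  shows "\<bar>average_outside p J h x - c x\<bar> \<le> average_outside p J (\<lambda>x. \<bar>h x - c x\<bar>) x"
proof -
  interpret prob_space "bern_prod p"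
    by (rule prob_space_bern_prod)
  have "c (merge_on J x y) = c x" for y
    using assms(3) by (simp add: depends_only_on_def)
  then have "average_outside p J h x - c x = (\<integral>y. h (merge_on J x y) - c (merge_on J x y) \<partial>bern_prod p)"
    unfolding average_outside_def using integrable_merge_on_right[OF assms(1,2)] prob_space by simp
  also have "\<bar>\<dots>\<bar> \<le> average_outside p J (\<lambda>x. \<bar>h x - c x\<bar>) x"
    unfolding average_outside_def by (rule integral_abs_bound)
  finally show ?thesis .
qed

lemma integral_abs_average_outside_diff:
  fixes h c :: "('i \<Rightarrow> bool) \<Rightarrow> real"
  assumes h: "h \<in> borel_measurable (bern_prod p)" "\<And>x. \<bar>h x\<bar> \<le> B"
    and c: "c \<in> borel_measurable (bern_prod p)" "\<And>x. \<bar>c x\<bar> \<le> B" "depends_only_on J c"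
  shows "(\<integral>x. \<bar>h x - average_outside p J h x\<bar> \<partial>bern_prod p) \<le> 2 * (\<integral>x. \<bar>h x - c x\<bar> \<partial>bern_prod p)"
proof -
  let ?avg = "average_outside p J h"
  let ?d = "\<lambda>x. \<bar>h x - c x\<bar>"
  have avg: "?avg \<in> borel_measurable (bern_prod p)" "\<bar>?avg x\<bar> \<le> B" for x
    using borel_measurable_average_outside[OF h(1)] abs_average_outside_le[OF h] by auto
  have diff_bound: "\<bar>u - v\<bar> \<le> 2 * B" if "\<bar>u\<bar> \<le> B" "\<bar>v\<bar> \<le> B" for u v :: real
    using that abs_triangle_ineq4[of u v] by linarith
  have d: "?d \<in> borel_measurable (bern_prod p)" "\<bar>?d x\<bar> \<le> 2 * B" for x
    using h(1) c(1) diff_bound[OF h(2) c(2)] by auto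
  have integrable: "integrable (bern_prod p) (\<lambda>x. \<bar>u x - v x\<bar>)"
    if "u \<in> borel_measurable (bern_prod p)" "v \<in> borel_measurable (bern_prod p)"
      "\<And>x. \<bar>u x\<bar> \<le> B" "\<And>x. \<bar>v x\<bar> \<le> B" for u v
    using that diff_bound by (intro integrable_bern_prod_bounded[where B="2 * B"]) auto
  have pointwise: "\<bar>?avg x - c x\<bar> \<le> average_outside p J ?d x" for x
    using h c(3) by (rule abs_average_outside_diff_le)
  have "(\<integral>x. \<bar>h x - ?avg x\<bar> \<partial>bern_prod p) \<le> (\<integral>x. \<bar>?avg x - c x\<bar> + ?d x \<partial>bern_prod p)"
    using integrable[OF h(1) avg(1) h(2) avg(2)] integrable[OF avg(1) c(1) avg(2) c(2)]
      integrable[OF h(1) c(1) h(2) c(2)]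
    by (intro integral_mono) auto
  also have "\<dots> = (\<integral>x. \<bar>?avg x - c x\<bar> \<partial>bern_prod p) + (\<integral>x. ?d x \<partial>bern_prod p)"
    using integrable[OF avg(1) c(1) avg(2) c(2)] integrable[OF h(1) c(1) h(2) c(2)]
    by (rule Bochner_Integration.integral_add)
  also have "(\<integral>x. \<bar>?avg x - c x\<bar> \<partial>bern_prod p) \<le> (\<integral>x. average_outside p J ?d x \<partial>bern_prod p)"
  proof (rule integral_mono)
    show "integrable (bern_prod p) (\<lambda>x. \<bar>?avg x - c x\<bar>)"
      by (rule integrable[OF avg(1) c(1) avg(2) c(2)])
    show "integrable (bern_prod p) (average_outside p J ?d)"
      using borel_measurable_average_outside[OF d(1)] abs_average_outside_le[OF d]
      by (rule integrable_bern_prod_bounded)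
  qed (rule pointwise)
  also have "(\<integral>x. average_outside p J ?d x \<partial>bern_prod p) = (\<integral>x. ?d x \<partial>bern_prod p)"
    using d by (intro integral_average_outside[where B="2 * B"]) auto
  finally show ?thesis
    by simp
qed

lemma product_diff_le_unit_interval:
  fixes a b c d :: real
  assumes "a \<in> {0..1}" "b \<in> {0..1}" "c \<in> {0..1}" "d \<in> {0..1}"
  shows "a * b - c * d \<le> \<bar>a - c\<bar> + \<bar>b - d\<bar>"
proof -
  have "(a - c) * b \<le> \<bar>a - c\<bar> * b"
    using assms by (intro mult_right_mono) auto
  also have "\<dots> \<le> \<bar>a - c\<bar>"
    using assms by (intro mult_left_le) auto
  finally have "(a - c) * b \<le> \<bar>a - c\<bar>" .
  moreover have "c * (b - d) \<le> c * \<bar>b - d\<bar>"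
    using assms by (intro mult_left_mono) auto
  moreover have "c * \<bar>b - d\<bar> \<le> \<bar>b - d\<bar>"
    using assms by (intro mult_left_le_one_le) auto
  moreover have "a * b - c * d = (a - c) * b + c * (b - d)"
    by (simp add: algebra_simps)
  ultimately show ?thesis
    by linarith
qed

lemma (in prob_space) product_defect_perturbation:
  fixes f g f' g' :: "'a \<Rightarrow> real"
  assumes measurable: "f \<in> borel_measurable M" "g \<in> borel_measurable M"
      "f' \<in> borel_measurable M" "g' \<in> borel_measurable M"
    and range: "\<And>x. f x \<in> {0..1}" "\<And>x. g x \<in> {0..1}" "\<And>x. f' x \<in> {0..1}" "\<And>x. g' x \<in> {0..1}"
  shows "expectation f * expectation g - expectation (\<lambda>x. f x * g x)
    \<le> expectation f' * expectation g' - expectation (\<lambda>x. f' x * g' x)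
      + 2 * (expectation (\<lambda>x. \<bar>f x - f' x\<bar>) + expectation (\<lambda>x. \<bar>g x - g' x\<bar>))"
proof -
  let ?df = "expectation (\<lambda>x. \<bar>f x - f' x\<bar>)" and ?dg = "expectation (\<lambda>x. \<bar>g x - g' x\<bar>)"
  have integrable: "integrable M h" if "h \<in> borel_measurable M" "\<And>x. \<bar>h x\<bar> \<le> 1" for h :: "'a \<Rightarrow> real"
    using that by (intro integrable_const_bound[where B=1]) auto
  have unit: "\<bar>u\<bar> \<le> 1" "\<bar>u * v\<bar> \<le> 1" "\<bar>\<bar>u - v\<bar>\<bar> \<le> 1" if "u \<in> {0..1}" "v \<in> {0..1}" for u v :: real
    using that by (auto simp: abs_mult intro: mult_le_one)
  have int: "integrable M f" "integrable M g" "integrable M f'" "integrable M g'"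
    "integrable M (\<lambda>x. f x * g x)" "integrable M (\<lambda>x. f' x * g' x)"
    "integrable M (\<lambda>x. \<bar>f x - f' x\<bar>)" "integrable M (\<lambda>x. \<bar>g x - g' x\<bar>)"
    using measurable unit[OF range(1,3)] unit[OF range(2,4)] unit[OF range(3,4)] unit[OF range(1,2)]
      unit[OF range(4,3)]
    by (auto intro!: integrable)
  have close: "\<bar>expectation u - expectation v\<bar> \<le> expectation (\<lambda>x. \<bar>u x - v x\<bar>)"
    if "integrable M u" "integrable M v" for u v :: "'a \<Rightarrow> real"
    using integral_abs_bound[of M "\<lambda>x. u x - v x"] Bochner_Integration.integral_diff[OF that] by simp
  have expectation_range: "expectation u \<in> {0..1}" if "integrable M u" "\<And>x. u x \<in> {0..1}" for u :: "'a \<Rightarrow> real"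
  proof -
    have "0 \<le> expectation u"
      using that by (intro integral_ge_const) auto
    moreover have "expectation u \<le> 1"
      using that by (intro integral_le_const) auto
    ultimately show ?thesis
      by simp
  qed
  have "expectation f * expectation g - expectation f' * expectation g'
      \<le> \<bar>expectation f - expectation f'\<bar> + \<bar>expectation g - expectation g'\<bar>"
    using int range by (intro product_diff_le_unit_interval expectation_range)
  also have "\<dots> \<le> ?df + ?dg"
    using close[OF int(1,3)] close[OF int(2,4)] by linarith
  finally have outer: "expectation f * expectation g - expectation f' * expectation g' \<le> ?df + ?dg" .
  have "expectation (\<lambda>x. f' x * g' x) - expectation (\<lambda>x. f x * g x)
      = expectation (\<lambda>x. f' x * g' x - f x * g x)"
    using int(5,6) by simp
  also have "\<dots> \<le> expectation (\<lambda>x. \<bar>f x - f' x\<bar> + \<bar>g x - g' x\<bar>)"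
    using int range product_diff_le_unit_interval[OF range(3,4,1,2)]
    by (intro integral_mono) (auto simp: abs_minus_commute)
  also have "\<dots> = ?df + ?dg"
    using int(7,8) by simp
  finally show ?thesis
    using outer by (simp add: distrib_left)
qed

lemma antimono_indicator:
  fixes S :: "'a::order set"
  assumes "antimono (\<lambda>x. x \<in> S)"
  shows "antimono (indicator S :: 'a \<Rightarrow> real)"
proof (rule antimonoI)
  fix x y :: 'a
  assume "x \<le> y"
  with assms have "(y \<in> S) \<le> (x \<in> S)"
    by (rule antimonoD)
  then show "(indicator S y :: real) \<le> indicator S x"
    by (auto simp: indicator_def)
qed

lemma depends_only_on_indicator:
  "depends_only_on J (\<lambda>x. x \<in> C) \<Longrightarrow> depends_only_on J (indicator C :: _ \<Rightarrow> real)"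
  by (simp add: depends_only_on_def indicator_def)

lemma average_outside_indicator:
  assumes "A \<in> sets (bern_prod p)"
  shows "average_outside p J (indicator A) \<in> borel_measurable (bern_prod p)"
    and "average_outside p J (indicator A) x \<in> {0..1}"
  using assms by (intro borel_measurable_average_outside average_outside_bounds; simp add: indicator_def)+

lemma integral_abs_indicator_average_outside:
  assumes "A \<in> sets (bern_prod p)" "C \<in> sets (bern_prod p)" "depends_only_on J (\<lambda>x. x \<in> C)"
  shows "(\<integral>x. \<bar>indicator A x - average_outside p J (indicator A) x\<bar> \<partial>bern_prod p)
    \<le> 2 * measure (bern_prod p) (sym_diff A C)"
proof -
  have "(\<lambda>x. \<bar>indicator A x - indicator C x\<bar> :: real) = indicator (sym_diff A C)"
    by (auto simp: indicator_def)
  then have "(\<integral>x. \<bar>indicator A x - indicator C x\<bar> \<partial>bern_prod p) = measure (bern_prod p) (sym_diff A C)"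
    using assms(1,2) by simp
  moreover have "(\<integral>x. \<bar>indicator A x - average_outside p J (indicator A) x\<bar> \<partial>bern_prod p)
      \<le> 2 * (\<integral>x. \<bar>indicator A x - indicator C x\<bar> \<partial>bern_prod p)"
    using assms by (intro integral_abs_average_outside_diff depends_only_on_indicator) auto
  ultimately show ?thesis
    by simp
qed

theorem harris_inequality_bern_prod:
  fixes p :: "'i \<Rightarrow> real"
  assumes p: "\<forall>i. 0 \<le> p i \<and> p i \<le> 1"
    and A: "A \<in> sets (bern_prod p)" "antimono (\<lambda>x. x \<in> A)"
    and B: "B \<in> sets (bern_prod p)" "antimono (\<lambda>x. x \<in> B)"
  shows "measure (bern_prod p) A * measure (bern_prod p) B \<le> measure (bern_prod p) (A \<inter> B)"
proof (rule field_le_epsilon)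
  interpret prob_space "bern_prod p"
    by (rule prob_space_bern_prod)
  fix e :: real
  assume "0 < e"
  then obtain J1 C1 J2 C2 where
    JC1: "finite J1" "C1 \<in> sets (bern_prod p)" "depends_only_on J1 (\<lambda>x. x \<in> C1)"
      "measure (bern_prod p) (sym_diff A C1) < e / 8" and
    JC2: "finite J2" "C2 \<in> sets (bern_prod p)" "depends_only_on J2 (\<lambda>x. x \<in> C2)"
      "measure (bern_prod p) (sym_diff B C2) < e / 8"
    using finitely_approximable_sets[OF A(1)] finitely_approximable_sets[OF B(1)]
    unfolding finitely_approximable_def by (metis divide_pos_pos zero_less_numeral)
  define J where "J = J1 \<union> J2"
  define f where "f = average_outside p J (indicator A)"
  define g where "g = average_outside p J (indicator B)"
  note f = average_outside_indicator[OF A(1), of J, folded f_def]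
  note g = average_outside_indicator[OF B(1), of J, folded g_def]
  have "\<bar>f x\<bar> \<le> 1" "\<bar>g x\<bar> \<le> 1" for x
    using f(2)[of x] g(2)[of x] by auto
  moreover have "antimono f" "antimono g"
    unfolding f_def g_def using A B
    by (auto intro!: antimono_average_outside[where B=1] antimono_indicator)
  moreover have "finite J" "depends_only_on J f" "depends_only_on J g"
    using JC1(1) JC2(1) by (auto simp: J_def f_def g_def depends_only_on_average_outside)
  ultimately have harris: "(\<integral>x. f x \<partial>bern_prod p) * (\<integral>x. g x \<partial>bern_prod p) \<le> (\<integral>x. f x * g x \<partial>bern_prod p)"
    using f(1) g(1) by (intro harris_inequality_finite_dependence[OF _ p, where B=1])
  have "depends_only_on J (\<lambda>x. x \<in> C1)" "depends_only_on J (\<lambda>x. x \<in> C2)"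
    using depends_only_on_mono[OF _ JC1(3), of J] depends_only_on_mono[OF _ JC2(3), of J]
    by (auto simp: J_def)
  then have "(\<integral>x. \<bar>indicator A x - f x\<bar> \<partial>bern_prod p) \<le> 2 * measure (bern_prod p) (sym_diff A C1)"
    "(\<integral>x. \<bar>indicator B x - g x\<bar> \<partial>bern_prod p) \<le> 2 * measure (bern_prod p) (sym_diff B C2)"
    unfolding f_def g_def using A(1) B(1) JC1(2) JC2(2) by (blast intro: integral_abs_indicator_average_outside)+
  moreover have "measure (bern_prod p) A * measure (bern_prod p) B - measure (bern_prod p) (A \<inter> B)
      \<le> (\<integral>x. f x \<partial>bern_prod p) * (\<integral>x. g x \<partial>bern_prod p) - (\<integral>x. f x * g x \<partial>bern_prod p)
        + 2 * ((\<integral>x. \<bar>indicator A x - f x\<bar> \<partial>bern_prod p) + (\<integral>x. \<bar>indicator B x - g x\<bar> \<partial>bern_prod p))"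
    using product_defect_perturbation[of "indicator A" "indicator B" f g] f g A(1) B(1)
    by (simp add: indicator_inter_arith[symmetric])
  ultimately show "measure (bern_prod p) A * measure (bern_prod p) B \<le> measure (bern_prod p) (A \<inter> B) + e"
    using harris JC1(4) JC2(4) by (simp add: distrib_left)
qed

corollary harris_inequality_bern_prod_INT:
  fixes p :: "'i \<Rightarrow> real" and A :: "nat \<Rightarrow> ('i \<Rightarrow> bool) set"
  assumes p: "\<forall>i. 0 \<le> p i \<and> p i \<le> 1"
    and "\<And>t. t \<le> n \<Longrightarrow> A t \<in> sets (bern_prod p)"
    and "\<And>t. t \<le> n \<Longrightarrow> antimono (\<lambda>x. x \<in> A t)"
  shows "(\<Prod>t\<le>n. measure (bern_prod p) (A t)) \<le> measure (bern_prod p) (\<Inter>t\<le>n. A t)"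
  using assms(2,3)
proof (induction n)
  case 0
  then show ?case
    by simp
next
  case (Suc n)
  have sets: "(\<Inter>t\<le>n. A t) \<in> sets (bern_prod p)"
    using Suc.prems(1) by (intro sets.finite_INT) auto
  have antimono: "antimono (\<lambda>x. x \<in> (\<Inter>t\<le>n. A t))"
  proof (rule antimonoI)
    fix x y :: "'i \<Rightarrow> bool"
    assume "x \<le> y"
    then have "y \<in> A t \<longrightarrow> x \<in> A t" if "t \<le> n" for t
      using Suc.prems(2)[of t] that antimonoD[of "\<lambda>x. x \<in> A t"] by (auto simp: le_bool_def)
    then show "(y \<in> (\<Inter>t\<le>n. A t)) \<le> (x \<in> (\<Inter>t\<le>n. A t))"
      by auto
  qed
  have "(\<Prod>t\<le>Suc n. measure (bern_prod p) (A t))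
      = (\<Prod>t\<le>n. measure (bern_prod p) (A t)) * measure (bern_prod p) (A (Suc n))"
    by simp
  also have "\<dots> \<le> measure (bern_prod p) (\<Inter>t\<le>n. A t) * measure (bern_prod p) (A (Suc n))"
    using Suc by (intro mult_right_mono) auto
  also have "\<dots> \<le> measure (bern_prod p) ((\<Inter>t\<le>n. A t) \<inter> A (Suc n))"
    using Suc.prems by (intro harris_inequality_bern_prod[OF p sets antimono]) auto
  also have "(\<Inter>t\<le>n. A t) \<inter> A (Suc n) = (\<Inter>t\<le>Suc n. A t)"
    by (auto simp: atMost_Suc)
  finally show ?case .
qed

lemma sets_bern_prod_superlevel:
  fixes f :: "('i \<Rightarrow> bool) \<Rightarrow> ereal"
  assumes "f \<in> borel_measurable (bern_prod p)"
  shows "{x. c < f x} \<in> sets (bern_prod p)"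
  using measurable_sets[OF assms, of "{c<..}"] by (simp add: vimage_def)

lemma antimono_mem_superlevel:
  fixes f :: "'a::order \<Rightarrow> 'b::order"
  assumes "antimono f"
  shows "antimono (\<lambda>x. x \<in> {x. c < f x})"
proof (rule antimonoI)
  fix x y :: 'a
  assume "x \<le> y"
  with assms have "f y \<le> f x"
    by (rule antimonoD)
  then show "(y \<in> {x. c < f x}) \<le> (x \<in> {x. c < f x})"
    by (auto intro: order_less_le_trans)
qed

lemma P_out_eq:
  assumes "measure M {\<omega> \<in> space M. S 0 \<omega> > ereal \<theta>} = 1 - Pb" and "Pb < 1"
  shows "P_out Pb M S \<theta> L = 1 - measure M {\<omega> \<in> space M. \<forall>t\<le>L. S t \<omega> > ereal \<theta>}"
proof -
  have "1 - Pb \<noteq> 0"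
    using assms(2) by simp
  then show ?thesis
    unfolding P_out_def P_fail_def assms(1) by (simp add: field_simps)
qed

theorem lemma5:
  fixes L :: nat and \<theta> :: real and Pb :: real
    and p :: "'i::countable \<Rightarrow> real"
    and S :: "nat \<Rightarrow> ('i \<Rightarrow> bool) \<Rightarrow> ereal"
  assumes "L \<ge> 1" and "\<theta> > 0"
    and "\<forall>i. 0 \<le> p i \<and> p i \<le> 1"
    and "\<forall>t\<le>L. \<forall>\<omega>. S t \<omega> > 0"
    and "\<forall>t\<le>L. antimono (S t)"
    and "\<forall>t\<le>L. S t \<in> borel_measurable (bern_prod p)"
    and "\<forall>t\<le>L. measure (bern_prod p) {\<omega> \<in> space (bern_prod p). S t \<omega> > ereal \<theta>} = 1 - Pb"
    and "0 \<le> Pb" and "Pb < 1"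
  shows "P_out Pb (bern_prod p) S \<theta> L \<le> 1 - (1 - Pb) ^ (L + 1)"
proof -
  let ?A = "\<lambda>t. {\<omega>. ereal \<theta> < S t \<omega>}"
  have "(1 - Pb) ^ (L + 1) = (\<Prod>t\<le>L. measure (bern_prod p) (?A t))"
    using assms(7) by simp
  also have "\<dots> \<le> measure (bern_prod p) (\<Inter>t\<le>L. ?A t)"
    using assms(3,5,6)
    by (intro harris_inequality_bern_prod_INT sets_bern_prod_superlevel antimono_mem_superlevel) auto
  also have "(\<Inter>t\<le>L. ?A t) = {\<omega> \<in> space (bern_prod p). \<forall>t\<le>L. S t \<omega> > ereal \<theta>}"
    by auto
  finally have "(1 - Pb) ^ (L + 1) \<le> measure (bern_prod p) {\<omega> \<in> space (bern_prod p). \<forall>t\<le>L. S t \<omega> > ereal \<theta>}" .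
  moreover have "P_out Pb (bern_prod p) S \<theta> L
      = 1 - measure (bern_prod p) {\<omega> \<in> space (bern_prod p). \<forall>t\<le>L. S t \<omega> > ereal \<theta>}"
    using assms(7,9) by (intro P_out_eq) auto
  ultimately show ?thesis
    by simp
qed

end
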